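(* Let $N\ge3$, $h=1/N$, $\rho_j=jh$, $I_j=[\rho_{j-1},\rho_j]$ ($j=1,\dots,N$, with $\rho_0\equiv\rho_N$ on $\mathbb{T}=\mathbb{R}/\mathbb{Z}$), and let $\mathbb{K}^h$ be the space of continuous periodic functions on $\mathbb{T}$ that are linear on each $I_j$. Let $(\boldsymbol{X}^h(\cdot,t),V^h(\cdot,t),\kappa^h(\cdot,t))\in[\mathbb{K}^h]^2\times\mathbb{K}^h\times\mathbb{K}^h$, $t\ge0$ (differentiable in $t$, with all segment lengths $|\boldsymbol{h}_j(t)|>0$), be a solution of: for all $t\ge0$, $$\big(\boldsymbol{n}^h\cdot\partial_t\boldsymbol{X}^h,\phi^h\big)^h_{\Gamma^h(t)}=\big(V^h,\phi^h\big)^h_{\Gamma^h(t)}\quad\forall\phi^h\in\mathbb{K}^h,$$ $$\big(V^h\boldsymbol{n}^h,\boldsymbol{\omega}^h\big)^h_{\Gamma^h(t)}=\Big(-\partial_s\kappa^h\,\boldsymbol{n}^h+\tfrac12(\kappa^h)^2\partial_s\boldsymbol{X}^h,\,\partial_s\boldsymbol{\omega}^h\Big)^h_{\Gamma^h(t)}\quad\forall\boldsymbol{\omega}^h\in[\mathbb{K}^h]^2,$$ $$\big(\partial_t\kappa^h,\psi^h\big)^h_{\Gamma^h(t)}=\big(\boldsymbol{n}^h\cdot\partial_s(\partial_t\boldsymbol{X}^h),\partial_s\psi^h\big)^h_{\Gamma^h(t)}-\big((\partial_s\boldsymbol{X}^h\cdot\partial_s(\partial_t\boldsymbol{X}^h))\,\kappa^h,\psi^h\big)^h_{\Gamma^h(t)}\quad\forall\psi^h\in\mathbb{K}^h,$$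 with initial data $\boldsymbol{X}^h(\cdot,0)=\boldsymbol{X}^h_0$, $\kappa^h(\cdot,0)=\kappa^h_0$. Then the discrete Willmore energy $$W^h(t):=\tfrac12\big((\kappa^h(\cdot,t))^2,1\big)^h_{\Gamma^h(t)}=\tfrac14\sum_{j=1}^N|\boldsymbol{h}_j(t)|\Big[(\kappa^h(\rho_{j-1},t))^2+(\kappa^h(\rho_j,t))^2\Big]$$ satisfies $W^h(t)\le W^h(t')\le W^h(0)$ for all $t\ge t'\ge0$, where $W^h(0)=\tfrac14\sum_{j=1}^N|\boldsymbol{h}_{0,j}|\big[(\kappa^h_0(\rho_{j-1}))^2+(\kappa^h_0(\rho_j))^2\big]$ with $\boldsymbol{h}_{0,j}=\boldsymbol{X}^h_0(\rho_j)-\boldsymbol{X}^h_0(\rho_{j-1})$.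
   Context: For $\boldsymbol{X}^h\in[\mathbb{K}^h]^2$, the polygon $\Gamma^h=\boldsymbol{X}^h(\mathbb{T})$ has edges $\boldsymbol{h}_j=\boldsymbol{X}^h(\rho_j)-\boldsymbol{X}^h(\rho_{j-1})$. For $u^h\in\mathbb{K}^h$ (or $[\mathbb{K}^h]^2$), the discrete arc-length derivative is the piecewise constant $\partial_s u^h|_{I_j}=\frac{u^h(\rho_j)-u^h(\rho_{j-1})}{|\boldsymbol{h}_j|}$. Discrete tangent and normal: $\boldsymbol{\tau}^h|_{I_j}=\partial_s\boldsymbol{X}^h|_{I_j}=\boldsymbol{h}_j/|\boldsymbol{h}_j|$, $\boldsymbol{n}^h|_{I_j}=-\boldsymbol{h}_j^\perp/|\boldsymbol{h}_j|$ with $(u_1,u_2)^\perp=(-u_2,u_1)$. Mass-lumped inner product for piecewise continuous (scalar or vector) $u,v$: $(u,v)^h_{\Gamma^h}=\frac12\sum_{j=1}^N|\boldsymbol{h}_j|\big[(u\cdot v)(\rho_{j-1}^+)+(u\cdot v)(\rho_j^-)\big]$, where one-sided limits are taken within $I_j$. *)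

theory Defs
  imports "HOL-Analysis.Analysis"
begin

text \<open>Elements of K^h are represented by their nodal values u :: nat => _,
  where node rho_j (j = 0..N-1) carries u j and node rho_N is identified with rho_0
  (we write u (j mod N) for the value at rho_j, j = 1..N).\<close>

definition perp :: "real^2 \<Rightarrow> real^2" where
  "perp u = (\<chi> i. if i = 1 then - (u $ 2) else u $ 1)"

definition edge :: "nat \<Rightarrow> (nat \<Rightarrow> real^2) \<Rightarrow> nat \<Rightarrow> real^2" where
  "edge N X j = X (j mod N) - X (j - 1)"

definition ds :: "nat \<Rightarrow> (nat \<Rightarrow> real^2) \<Rightarrow> (nat \<Rightarrow> 'a::real_vector) \<Rightarrow> nat \<Rightarrow> 'a" where
  "ds N X u j = (1 / norm (edge N X j)) *\<^sub>R (u (j mod N) - u (j - 1))"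

definition tang :: "nat \<Rightarrow> (nat \<Rightarrow> real^2) \<Rightarrow> nat \<Rightarrow> real^2" where
  "tang N X j = ds N X X j"

definition nrm :: "nat \<Rightarrow> (nat \<Rightarrow> real^2) \<Rightarrow> nat \<Rightarrow> real^2" where
  "nrm N X j = - ((1 / norm (edge N X j)) *\<^sub>R perp (edge N X j))"

text \<open>Mass-lumped inner product: L j = (u.v)(rho_{j-1}^+), R j = (u.v)(rho_j^-), taken within I_j.\<close>
definition lumped :: "nat \<Rightarrow> (nat \<Rightarrow> real^2) \<Rightarrow> (nat \<Rightarrow> real) \<Rightarrow> (nat \<Rightarrow> real) \<Rightarrow> real" where
  "lumped N X L R = (1/2) * (\<Sum>j=1..N. norm (edge N X j) * (L j + R j))"

definition willmore :: "nat \<Rightarrow> (nat \<Rightarrow> real^2) \<Rightarrow> (nat \<Rightarrow> real) \<Rightarrow> real" where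
  "willmore N X k = (1/2) * lumped N X (\<lambda>j. (k (j - 1))\<^sup>2) (\<lambda>j. (k (j mod N))\<^sup>2)"

end

theory Submission
  imports Defs
begin

text \<open>Testing the three equations with \<open>\<phi> = V\<close>, \<open>\<omega> = \<partial>\<^sub>tX\<close> and \<open>\<psi> = \<kappa>\<close> and
  combining them yields \<open>(\<partial>\<^sub>t\<kappa>, \<kappa>)\<^sup>h + (1/2) ((\<tau>\<cdot>\<partial>\<^sub>s\<partial>\<^sub>tX) \<kappa>, \<kappa>)\<^sup>h = -(V, V)\<^sup>h\<close>. Since
  \<open>\<partial>\<^sub>t|h\<^sub>j| = |h\<^sub>j| \<tau>\<cdot>\<partial>\<^sub>s\<partial>\<^sub>tX\<close> on \<open>I\<^sub>j\<close>, the left-hand side is exactly the time derivative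
  of the lumped energy \<open>W\<^sup>h\<close>, so \<open>W\<^sup>h\<close> has derivative \<open>-(V, V)\<^sup>h \<le> 0\<close> and is
  nonincreasing by the mean value theorem.\<close>

definition nodal_inner :: "nat \<Rightarrow> (nat \<Rightarrow> real^2) \<Rightarrow> (nat \<Rightarrow> real) \<Rightarrow> (nat \<Rightarrow> real) \<Rightarrow> real" where
  "nodal_inner N X u v = lumped N X (\<lambda>j. u (j - 1) * v (j - 1)) (\<lambda>j. u (j mod N) * v (j mod N))"

lemma nodal_inner_self_nonneg: "0 \<le> nodal_inner N X u u"
  unfolding nodal_inner_def lumped_def by (auto intro!: sum_nonneg)

lemma lumped_cong:
  assumes "\<And>j. L j + R j = L' j + R' j"
  shows "lumped N X L R = lumped N X L' R'"
  unfolding lumped_def using assms by simp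

lemma lumped_linear_combination:
  assumes "\<And>j. L j + R j = a * (L1 j + R1 j) + b * (L2 j + R2 j)"
  shows "lumped N X L R = a * lumped N X L1 R1 + b * lumped N X L2 R2"
  unfolding lumped_def using assms
  by (simp add: sum_distrib_left sum.distrib[symmetric] algebra_simps)

lemma willmore_eq_sum:
  "willmore N X \<kappa> = (1/4) * (\<Sum>j=1..N. norm (edge N X j) * ((\<kappa> (j - 1))\<^sup>2 + (\<kappa> (j mod N))\<^sup>2))"
  unfolding willmore_def lumped_def by simp

lemma has_real_derivative_norm:
  fixes Y :: "real \<Rightarrow> 'a::real_inner"
  assumes "(Y has_vector_derivative D) (at t within S)" and "Y t \<noteq> 0"
  shows "((\<lambda>s. norm (Y s)) has_real_derivative sgn (Y t) \<bullet> D) (at t within S)"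
proof -
  have "((\<lambda>s. norm (Y s)) has_derivative (\<lambda>h. sgn (Y t) \<bullet> (h *\<^sub>R D))) (at t within S)"
    using has_derivative_compose[OF assms(1)[unfolded has_vector_derivative_def]
        has_derivative_norm[OF assms(2)]]
    by (simp add: inner_commute)
  then show ?thesis
    unfolding has_field_derivative_def
    by (rule has_derivative_eq_rhs) (auto simp: fun_eq_iff inner_commute)
qed

lemma has_real_derivative_edge_norm:
  assumes dX: "\<And>i. ((\<lambda>s. X s i) has_vector_derivative Xt i) (at t within S)"
    and nz: "edge N (X t) j \<noteq> 0"
  shows "((\<lambda>s. norm (edge N (X s) j)) has_real_derivative
           norm (edge N (X t) j) * (ds N (X t) (X t) j \<bullet> ds N (X t) Xt j)) (at t within S)"
proof -
  have "((\<lambda>s. edge N (X s) j) has_vector_derivative Xt (j mod N) - Xt (j - 1)) (at t within S)"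
    unfolding edge_def by (intro has_vector_derivative_diff dX)
  moreover have "sgn (edge N (X t) j) \<bullet> (Xt (j mod N) - Xt (j - 1))
      = norm (edge N (X t) j) * (ds N (X t) (X t) j \<bullet> ds N (X t) Xt j)"
  proof -
    have dsX: "ds N (X t) (X t) j = (1 / norm (edge N (X t) j)) *\<^sub>R edge N (X t) j"
      unfolding ds_def edge_def ..
    have dsXt: "ds N (X t) Xt j = (1 / norm (edge N (X t) j)) *\<^sub>R (Xt (j mod N) - Xt (j - 1))"
      unfolding ds_def ..
    show ?thesis
      unfolding dsX dsXt using nz by (simp add: sgn_div_norm inner_diff_right field_simps)
  qed
  ultimately show ?thesis
    using has_real_derivative_norm nz by metis
qed

lemma has_real_derivative_willmore:
  assumes dX: "\<And>i. ((\<lambda>s. X s i) has_vector_derivative Xt i) (at t within S)"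
    and d\<kappa>: "\<And>i. ((\<lambda>s. \<kappa> s i) has_real_derivative \<kappa>t i) (at t within S)"
    and nz: "\<And>j. j \<in> {1..N} \<Longrightarrow> edge N (X t) j \<noteq> 0"
  shows "((\<lambda>s. willmore N (X s) (\<kappa> s)) has_real_derivative
           nodal_inner N (X t) \<kappa>t (\<kappa> t)
           + (1/2) * lumped N (X t)
               (\<lambda>j. (ds N (X t) (X t) j \<bullet> ds N (X t) Xt j) * \<kappa> t (j - 1) * \<kappa> t (j - 1))
               (\<lambda>j. (ds N (X t) (X t) j \<bullet> ds N (X t) Xt j) * \<kappa> t (j mod N) * \<kappa> t (j mod N)))
         (at t within S)"
proof -
  let ?r = "\<lambda>j. ds N (X t) (X t) j \<bullet> ds N (X t) Xt j"
  have "((\<lambda>s. norm (edge N (X s) j) * ((\<kappa> s (j - 1))\<^sup>2 + (\<kappa> s (j mod N))\<^sup>2)) has_real_derivative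
          norm (edge N (X t) j) * (?r j * ((\<kappa> t (j - 1))\<^sup>2 + (\<kappa> t (j mod N))\<^sup>2)
            + 2 * \<kappa> t (j - 1) * \<kappa>t (j - 1) + 2 * \<kappa> t (j mod N) * \<kappa>t (j mod N)))
        (at t within S)" if "j \<in> {1..N}" for j
    using DERIV_mult[OF has_real_derivative_edge_norm[OF dX nz[OF that]]
        DERIV_add[OF DERIV_power[OF d\<kappa>[of "j - 1"], of 2] DERIV_power[OF d\<kappa>[of "j mod N"], of 2]]]
    by (simp add: algebra_simps)
  then have "((\<lambda>s. willmore N (X s) (\<kappa> s)) has_real_derivative
          (1/4) * (\<Sum>j=1..N. norm (edge N (X t) j) * (?r j * ((\<kappa> t (j - 1))\<^sup>2 + (\<kappa> t (j mod N))\<^sup>2)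
            + 2 * \<kappa> t (j - 1) * \<kappa>t (j - 1) + 2 * \<kappa> t (j mod N) * \<kappa>t (j mod N))))
         (at t within S)"
    unfolding willmore_eq_sum by (intro DERIV_cmult DERIV_sum) auto
  then show ?thesis
    unfolding nodal_inner_def lumped_def
    by (simp add: sum_distrib_left sum.distrib[symmetric] power2_eq_square algebra_simps)
qed

lemma lumped_energy_identity:
  assumes eq1: "lumped N X
      (\<lambda>j. (nrm N X j \<bullet> Xt (j - 1)) * V (j - 1))
      (\<lambda>j. (nrm N X j \<bullet> Xt (j mod N)) * V (j mod N))
    = nodal_inner N X V V"
    and eq2: "lumped N X
      (\<lambda>j. V (j - 1) * (nrm N X j \<bullet> Xt (j - 1)))
      (\<lambda>j. V (j mod N) * (nrm N X j \<bullet> Xt (j mod N)))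
    = lumped N X
      (\<lambda>j. (- (ds N X \<kappa> j *\<^sub>R nrm N X j) + ((1/2) * (\<kappa> (j - 1))\<^sup>2) *\<^sub>R ds N X X j) \<bullet> ds N X Xt j)
      (\<lambda>j. (- (ds N X \<kappa> j *\<^sub>R nrm N X j) + ((1/2) * (\<kappa> (j mod N))\<^sup>2) *\<^sub>R ds N X X j) \<bullet> ds N X Xt j)"
    and eq3: "nodal_inner N X \<kappa>t \<kappa>
    = lumped N X
        (\<lambda>j. (nrm N X j \<bullet> ds N X Xt j) * ds N X \<kappa> j)
        (\<lambda>j. (nrm N X j \<bullet> ds N X Xt j) * ds N X \<kappa> j)
      - lumped N X
        (\<lambda>j. (ds N X X j \<bullet> ds N X Xt j) * \<kappa> (j - 1) * \<kappa> (j - 1))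
        (\<lambda>j. (ds N X X j \<bullet> ds N X Xt j) * \<kappa> (j mod N) * \<kappa> (j mod N))"
  shows "nodal_inner N X \<kappa>t \<kappa>
    + (1/2) * lumped N X
        (\<lambda>j. (ds N X X j \<bullet> ds N X Xt j) * \<kappa> (j - 1) * \<kappa> (j - 1))
        (\<lambda>j. (ds N X X j \<bullet> ds N X Xt j) * \<kappa> (j mod N) * \<kappa> (j mod N))
    = - nodal_inner N X V V"
proof -
  let ?A = "lumped N X
        (\<lambda>j. (nrm N X j \<bullet> ds N X Xt j) * ds N X \<kappa> j)
        (\<lambda>j. (nrm N X j \<bullet> ds N X Xt j) * ds N X \<kappa> j)"
  let ?C = "lumped N X
        (\<lambda>j. (ds N X X j \<bullet> ds N X Xt j) * \<kappa> (j - 1) * \<kappa> (j - 1))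
        (\<lambda>j. (ds N X X j \<bullet> ds N X Xt j) * \<kappa> (j mod N) * \<kappa> (j mod N))"
  have "nodal_inner N X V V = lumped N X
      (\<lambda>j. V (j - 1) * (nrm N X j \<bullet> Xt (j - 1)))
      (\<lambda>j. V (j mod N) * (nrm N X j \<bullet> Xt (j mod N)))"
    unfolding eq1[symmetric] by (rule lumped_cong) simp
  also have "\<dots> = (-1) * ?A + (1/2) * ?C"
    unfolding eq2
    by (rule lumped_linear_combination)
      (simp add: power2_eq_square algebra_simps)
  finally show ?thesis
    using eq3 by simp
qed

lemma nonpos_derivative_imp_antitone:
  fixes f f' :: "real \<Rightarrow> real"
  assumes deriv: "\<And>x. x \<in> S \<Longrightarrow> (f has_real_derivative f' x) (at x within S)"
    and nonpos: "\<And>x. x \<in> S \<Longrightarrow> f' x \<le> 0"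
    and "{a..b} \<subseteq> S" and "a \<le> b"
  shows "f b \<le> f a"
proof (cases "a = b")
  case False
  then have "a < b" using \<open>a \<le> b\<close> by simp
  moreover have "(f has_derivative (*) (f' x)) (at x within {a..b})" if "x \<in> {a..b}" for x
    using DERIV_subset[OF deriv \<open>{a..b} \<subseteq> S\<close>] that \<open>{a..b} \<subseteq> S\<close>
    by (auto simp: has_field_derivative_def)
  ultimately obtain x where x: "x \<in> {a<..<b}" and mvt: "f b - f a = f' x * (b - a)"
    using mvt_simple[of a b f "\<lambda>x. (*) (f' x)"] by auto
  have "f' x \<le> 0"
    using x \<open>{a..b} \<subseteq> S\<close> by (intro nonpos) auto
  then have "f' x * (b - a) \<le> 0"
    using \<open>a < b\<close> by (simp add: mult_nonpos_nonneg)
  with mvt show ?thesis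
    by linarith
qed simp

theorem theorem3p1:
  fixes N :: nat
    and X Xt :: "real \<Rightarrow> nat \<Rightarrow> real^2"
    and V \<kappa> \<kappa>t :: "real \<Rightarrow> nat \<Rightarrow> real"
    and X0 :: "nat \<Rightarrow> real^2" and \<kappa>0 :: "nat \<Rightarrow> real"
  assumes N3: "N \<ge> 3"
    and dX: "\<And>t j. t \<ge> 0 \<Longrightarrow> ((\<lambda>s. X s j) has_vector_derivative Xt t j) (at t within {0..})"
    and d\<kappa>: "\<And>t j. t \<ge> 0 \<Longrightarrow> ((\<lambda>s. \<kappa> s j) has_real_derivative \<kappa>t t j) (at t within {0..})"
    and pos: "\<And>t j. t \<ge> 0 \<Longrightarrow> j \<in> {1..N} \<Longrightarrow> norm (edge N (X t) j) > 0"
    and eq1: "\<And>t \<phi>. t \<ge> 0 \<Longrightarrow>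
      lumped N (X t)
        (\<lambda>j. (nrm N (X t) j \<bullet> Xt t (j - 1)) * \<phi> (j - 1))
        (\<lambda>j. (nrm N (X t) j \<bullet> Xt t (j mod N)) * \<phi> (j mod N))
      = lumped N (X t)
        (\<lambda>j. V t (j - 1) * \<phi> (j - 1))
        (\<lambda>j. V t (j mod N) * \<phi> (j mod N))"
    and eq2: "\<And>t \<omega>. t \<ge> 0 \<Longrightarrow>
      lumped N (X t)
        (\<lambda>j. V t (j - 1) * (nrm N (X t) j \<bullet> \<omega> (j - 1)))
        (\<lambda>j. V t (j mod N) * (nrm N (X t) j \<bullet> \<omega> (j mod N)))
      = lumped N (X t)
        (\<lambda>j. (- (ds N (X t) (\<kappa> t) j *\<^sub>R nrm N (X t) j)
               + ((1/2) * (\<kappa> t (j - 1))\<^sup>2) *\<^sub>R ds N (X t) (X t) j) \<bullet> ds N (X t) \<omega> j)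
        (\<lambda>j. (- (ds N (X t) (\<kappa> t) j *\<^sub>R nrm N (X t) j)
               + ((1/2) * (\<kappa> t (j mod N))\<^sup>2) *\<^sub>R ds N (X t) (X t) j) \<bullet> ds N (X t) \<omega> j)"
    and eq3: "\<And>t \<psi>. t \<ge> 0 \<Longrightarrow>
      lumped N (X t)
        (\<lambda>j. \<kappa>t t (j - 1) * \<psi> (j - 1))
        (\<lambda>j. \<kappa>t t (j mod N) * \<psi> (j mod N))
      = lumped N (X t)
          (\<lambda>j. (nrm N (X t) j \<bullet> ds N (X t) (Xt t) j) * ds N (X t) \<psi> j)
          (\<lambda>j. (nrm N (X t) j \<bullet> ds N (X t) (Xt t) j) * ds N (X t) \<psi> j)
        - lumped N (X t)
          (\<lambda>j. (ds N (X t) (X t) j \<bullet> ds N (X t) (Xt t) j) * \<kappa> t (j - 1) * \<psi> (j - 1))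
          (\<lambda>j. (ds N (X t) (X t) j \<bullet> ds N (X t) (Xt t) j) * \<kappa> t (j mod N) * \<psi> (j mod N))"
    and init: "X 0 = X0" "\<kappa> 0 = \<kappa>0"
  shows "\<forall>t t'. 0 \<le> t' \<and> t' \<le> t \<longrightarrow>
           willmore N (X t) (\<kappa> t) \<le> willmore N (X t') (\<kappa> t')
         \<and> willmore N (X t') (\<kappa> t') \<le>
             (1/4) * (\<Sum>j=1..N. norm (X0 (j mod N) - X0 (j - 1)) * ((\<kappa>0 (j - 1))\<^sup>2 + (\<kappa>0 (j mod N))\<^sup>2))"
proof -
  have deriv: "((\<lambda>s. willmore N (X s) (\<kappa> s)) has_real_derivative - nodal_inner N (X t) (V t) (V t))
      (at t within {0..})" if t: "t \<ge> 0" for t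
  proof -
    have "edge N (X t) j \<noteq> 0" if "j \<in> {1..N}" for j
      using pos[OF t that] by auto
    with dX[OF t] d\<kappa>[OF t] show ?thesis
      unfolding lumped_energy_identity[OF eq1[OF t, of "V t", folded nodal_inner_def]
          eq2[OF t, of "Xt t"] eq3[OF t, of "\<kappa> t", folded nodal_inner_def], symmetric]
      by (rule has_real_derivative_willmore)
  qed
  have antitone: "willmore N (X t) (\<kappa> t) \<le> willmore N (X t') (\<kappa> t')" if "0 \<le> t'" "t' \<le> t" for t t'
    using that by (intro nonpos_derivative_imp_antitone[OF deriv]) (auto simp: nodal_inner_self_nonneg)
  have "willmore N (X 0) (\<kappa> 0) =
      (1/4) * (\<Sum>j=1..N. norm (X0 (j mod N) - X0 (j - 1)) * ((\<kappa>0 (j - 1))\<^sup>2 + (\<kappa>0 (j mod N))\<^sup>2))"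
    by (simp add: willmore_eq_sum edge_def init)
  then show ?thesis
    using antitone by (metis order.refl)
qed

end
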